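(* Fix an iteration index $k$ and a current policy $\pi_k$. Assume that for $\rho_{\mathcal Q}$-almost every $q$ we have $0<\mu_{\pi_k}(q)<1$ (so that $\tilde\sigma_k(q)>0$). Then for every policy $\pi$, \[ \mathbb{E}_{q\sim\rho_{\mathcal Q}}\bigl[p_{\pi}(q)-p_{\pi_k}(q)\bigr] \;\ge\; \mathbb{E}_{q\sim\rho_{\mathcal Q}}\bigl[\tilde L_{\pi_k}(\pi(\cdot\mid q))\bigr] -2\sqrt{\mathbb{E}_{q\sim\rho_{\mathcal Q}}\Bigl(\tfrac{1-\rho^+(q)-\rho^-(q)-\tilde\sigma_k(q)}{\tilde\sigma_k(q)}\Bigr)^2}\; \sqrt{\mathbb{E}_{q\sim\rho_{\mathcal Q}}\mathrm{TV}^2\bigl(\pi(\cdot\mid q)\,\|\,\pi_k(\cdot\mid q)\bigr)}. \]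
   Context: Setting: $\mathcal Q$ is a set of prompts with a probability distribution $\rho_{\mathcal Q}$; $\mathcal O$ is a countable set of responses; $r^*:\mathcal Q\times\mathcal O\to\{0,1\}$ is the true (binary) reward. A policy $\pi$ assigns to each $q$ a probability distribution $\pi(\cdot\mid q)$ on $\mathcal O$. The success probability is $p_\pi(q)=\mathbb E_{o\sim\pi(\cdot\mid q)}[r^*(q,o)]$. $\mathrm{TV}(P,Q)=\sup_A|P(A)-Q(A)|$ is the total variation distance. Noise model: for each $q$ there are flip rates $\rho^+(q),\rho^-(q)\in[0,1]$; with $\xi\sim U[0,1]$ independent of $(q,o)$, the observed reward is $\tilde r(q,o,\xi)=(1-r^*(q,o))\mathbf 1_{\{\xi\le\rho^+(q)\}}+r^*(q,o)\mathbf 1_{\{\xi\le 1-\rho^-(q)\}}$. Define $\mu_{\pi_k}(q)=\rho^+(q)+(1-\rho^+(q)-\rho^-(q))\,p_{\pi_k}(q)$ and $\tilde\sigma_k(q)=\sqrt{\mu_{\pi_k}(q)(1-\mu_{\pi_k}(q))}$ (the mean and standard deviation of $\tilde r$ under $o\sim\pi_k(\cdot\mid q)$, $\xi\sim U[0,1]$). The noisy surrogate is \[ \tilde L_{\pi_k}(\pi(\cdot\mid q))=\frac{\mathbb E_{\xi,o\sim\pi(\cdot\mid q)}[\tilde r(q,o,\xi)]-\mathbb E_{\xi,o\sim\pi_k(\cdot\mid q)}[\tilde r(q,o,\xi)]}{\tilde\sigma_k(q)}=\frac{(1-\rho^+(q)-\rho^-(q))\,(p_\pi(q)-p_{\pi_k}(q))}{\tilde\sigma_k(q)}.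 \] *)

theory Defs
  imports "HOL-Probability.Probability"
begin

definition succ_prob :: "('q \<Rightarrow> 'o \<Rightarrow> real) \<Rightarrow> ('q \<Rightarrow> 'o pmf) \<Rightarrow> 'q \<Rightarrow> real" where
  "succ_prob rstar pol q = measure_pmf.expectation (pol q) (\<lambda>y. rstar q y)"

definition tv_dist :: "'o pmf \<Rightarrow> 'o pmf \<Rightarrow> real" where
  "tv_dist P Q = (SUP A. \<bar>measure_pmf.prob P A - measure_pmf.prob Q A\<bar>)"

definition noisy_reward ::
  "('q \<Rightarrow> 'o \<Rightarrow> real) \<Rightarrow> ('q \<Rightarrow> real) \<Rightarrow> ('q \<Rightarrow> real) \<Rightarrow> 'q \<Rightarrow> 'o \<Rightarrow> real \<Rightarrow> real" where
  "noisy_reward rstar rp rm q y xi =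
     (1 - rstar q y) * indicator {..rp q} xi + rstar q y * indicator {..1 - rm q} xi"

abbreviation unif01 :: "real measure" where
  "unif01 \<equiv> uniform_measure lborel {0..1}"

definition noisy_mean ::
  "('q \<Rightarrow> 'o \<Rightarrow> real) \<Rightarrow> ('q \<Rightarrow> real) \<Rightarrow> ('q \<Rightarrow> real) \<Rightarrow> ('q \<Rightarrow> 'o pmf) \<Rightarrow> 'q \<Rightarrow> real" where
  "noisy_mean rstar rp rm pol q =
     measure_pmf.expectation (pol q) (\<lambda>y. \<integral>xi. noisy_reward rstar rp rm q y xi \<partial>unif01)"

definition mu_k ::
  "('q \<Rightarrow> 'o \<Rightarrow> real) \<Rightarrow> ('q \<Rightarrow> real) \<Rightarrow> ('q \<Rightarrow> real) \<Rightarrow> ('q \<Rightarrow> 'o pmf) \<Rightarrow> 'q \<Rightarrow> real" where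
  "mu_k rstar rp rm polk q = rp q + (1 - rp q - rm q) * succ_prob rstar polk q"

definition sigma_k ::
  "('q \<Rightarrow> 'o \<Rightarrow> real) \<Rightarrow> ('q \<Rightarrow> real) \<Rightarrow> ('q \<Rightarrow> real) \<Rightarrow> ('q \<Rightarrow> 'o pmf) \<Rightarrow> 'q \<Rightarrow> real" where
  "sigma_k rstar rp rm polk q =
     sqrt (mu_k rstar rp rm polk q * (1 - mu_k rstar rp rm polk q))"

definition noisy_surrogate ::
  "('q \<Rightarrow> 'o \<Rightarrow> real) \<Rightarrow> ('q \<Rightarrow> real) \<Rightarrow> ('q \<Rightarrow> real) \<Rightarrow> ('q \<Rightarrow> 'o pmf) \<Rightarrow> ('q \<Rightarrow> 'o pmf) \<Rightarrow> 'q \<Rightarrow> real" where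
  "noisy_surrogate rstar rp rm polk pol q =
     (noisy_mean rstar rp rm pol q - noisy_mean rstar rp rm polk q) / sigma_k rstar rp rm polk q"

end

theory Submission
  imports Defs
begin

text \<open>Because the mean of the noisy reward is affine in the success probability, the noisy
  surrogate equals \<open>c d / \<sigma>\<close> with \<open>c = 1 - \<rho>\<^sup>+ - \<rho>\<^sup>-\<close> and
  \<open>d = p\<^sub>\<pi> - p\<^sub>\<pi>\<^sub>k\<close>, i.e. \<open>d + d r\<close> with \<open>r = (c - \<sigma>) / \<sigma>\<close>.
  So \<open>E d = E L - E (d r)\<close>, and by Cauchy-Schwarz and \<open>|d| \<le> TV\<close> the error term is at most
  \<open>sqrt (E r\<^sup>2) sqrt (E TV\<^sup>2)\<close>; the factor 2 in the statement is slack.\<close>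

lemma integrable_mult_of_square_integrable:
  fixes f g :: "'a \<Rightarrow> real"
  assumes [measurable]: "f \<in> borel_measurable M" "g \<in> borel_measurable M"
    and "integrable M (\<lambda>x. (f x)\<^sup>2)" "integrable M (\<lambda>x. (g x)\<^sup>2)"
  shows "integrable M (\<lambda>x. f x * g x)"
proof (rule Bochner_Integration.integrable_bound)
  show "integrable M (\<lambda>x. (f x)\<^sup>2 + (g x)\<^sup>2)" using assms(3,4) by simp
  have "\<bar>f x * g x\<bar> \<le> (f x)\<^sup>2 + (g x)\<^sup>2" for x
    using sum_squares_bound[of "\<bar>f x\<bar>" "\<bar>g x\<bar>"] abs_ge_zero[of "f x * g x"]
    unfolding abs_mult power2_abs mult.assoc by linarith
  then show "AE x in M. norm (f x * g x) \<le> norm ((f x)\<^sup>2 + (g x)\<^sup>2)" by simp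
qed simp

lemma Cauchy_Schwarz_integral:
  fixes f g :: "'a \<Rightarrow> real"
  assumes [measurable]: "f \<in> borel_measurable M" "g \<in> borel_measurable M"
    and f2: "integrable M (\<lambda>x. (f x)\<^sup>2)" and g2: "integrable M (\<lambda>x. (g x)\<^sup>2)"
  shows "(\<integral>x. f x * g x \<partial>M) \<le> sqrt (\<integral>x. (f x)\<^sup>2 \<partial>M) * sqrt (\<integral>x. (g x)\<^sup>2 \<partial>M)"
proof -
  have fg: "integrable M (\<lambda>x. \<bar>f x\<bar> * \<bar>g x\<bar>)"
    by (rule integrable_mult_of_square_integrable) (use f2 g2 in simp_all)
  have nn: "(\<integral>\<^sup>+x. ennreal (h x) \<partial>M) = ennreal (\<integral>x. h x \<partial>M)"
    if "integrable M h" "\<And>x. 0 \<le> h x" for h :: "'a \<Rightarrow> real"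
    using that by (intro nn_integral_eq_integral) auto
  have "ennreal ((\<integral>x. \<bar>f x\<bar> * \<bar>g x\<bar> \<partial>M)\<^sup>2) = (\<integral>\<^sup>+x. ennreal \<bar>f x\<bar> * ennreal \<bar>g x\<bar> \<partial>M)\<^sup>2"
    by (simp add: nn[OF fg] ennreal_power ennreal_mult[symmetric])
  also have "\<dots> \<le> (\<integral>\<^sup>+x. ennreal \<bar>f x\<bar> ^ 2 \<partial>M) * (\<integral>\<^sup>+x. ennreal \<bar>g x\<bar> ^ 2 \<partial>M)"
    by (rule Cauchy_Schwarz_nn_integral) simp_all
  also have "\<dots> = ennreal ((\<integral>x. (f x)\<^sup>2 \<partial>M) * (\<integral>x. (g x)\<^sup>2 \<partial>M))"
    by (simp add: ennreal_power nn[OF f2] nn[OF g2] ennreal_mult)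
  finally have "(\<integral>x. \<bar>f x\<bar> * \<bar>g x\<bar> \<partial>M)\<^sup>2 \<le> (\<integral>x. (f x)\<^sup>2 \<partial>M) * (\<integral>x. (g x)\<^sup>2 \<partial>M)"
    by (simp add: ennreal_le_iff)
  then have "(\<integral>x. \<bar>f x\<bar> * \<bar>g x\<bar> \<partial>M) \<le> sqrt (\<integral>x. (f x)\<^sup>2 \<partial>M) * sqrt (\<integral>x. (g x)\<^sup>2 \<partial>M)"
    by (metis real_le_rsqrt real_sqrt_mult)
  moreover have "(\<integral>x. f x * g x \<partial>M) \<le> (\<integral>x. \<bar>f x\<bar> * \<bar>g x\<bar> \<partial>M)"
    by (rule integral_mono[OF integrable_mult_of_square_integrable fg])
      (use f2 g2 in \<open>simp_all add: abs_mult[symmetric]\<close>)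
  ultimately show ?thesis by linarith
qed

lemma (in prob_space) integral_ge_integral_rescaled:
  fixes c s d t :: "'a \<Rightarrow> real"
  assumes [measurable]: "c \<in> borel_measurable M" "s \<in> borel_measurable M"
      "d \<in> borel_measurable M" "t \<in> borel_measurable M"
    and d_le_t: "\<And>x. \<bar>d x\<bar> \<le> t x" and t_le_1: "\<And>x. t x \<le> 1"
    and s_nonzero: "AE x in M. s x \<noteq> 0"
    and ratio2: "integrable M (\<lambda>x. ((c x - s x) / s x)\<^sup>2)"
  shows "(\<integral>x. c x * d x / s x \<partial>M)
           - sqrt (\<integral>x. ((c x - s x) / s x)\<^sup>2 \<partial>M) * sqrt (\<integral>x. (t x)\<^sup>2 \<partial>M)
         \<le> (\<integral>x. d x \<partial>M)"
proof -
  define r where "r x = (c x - s x) / s x" for x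
  have [measurable]: "r \<in> borel_measurable M" unfolding r_def by measurable
  have d_abs_le_1: "\<bar>d x\<bar> \<le> 1" and t_abs_le_1: "\<bar>t x\<bar> \<le> 1" for x
    using d_le_t[of x] t_le_1[of x] by auto
  have d2_le_t2: "(d x)\<^sup>2 \<le> (t x)\<^sup>2" for x
    using d_le_t[of x] by (metis abs_ge_zero abs_le_square_iff abs_of_nonneg order_trans)
  have d: "integrable M d" and d2: "integrable M (\<lambda>x. (d x)\<^sup>2)"
    and t2: "integrable M (\<lambda>x. (t x)\<^sup>2)"
    by (auto intro!: integrable_const_bound[where B=1] simp: abs_square_le_1 d_abs_le_1 t_abs_le_1)
  have r2: "integrable M (\<lambda>x. (r x)\<^sup>2)" using ratio2 unfolding r_def .
  have dr: "integrable M (\<lambda>x. d x * r x)"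
    by (rule integrable_mult_of_square_integrable) (use d2 r2 in simp_all)
  have "AE x in M. c x * d x / s x = d x + d x * r x"
    using s_nonzero by eventually_elim (simp add: r_def field_simps)
  then have "(\<integral>x. c x * d x / s x \<partial>M) = (\<integral>x. d x + d x * r x \<partial>M)"
    by (intro integral_cong_AE) simp_all
  also have "\<dots> = (\<integral>x. d x \<partial>M) + (\<integral>x. d x * r x \<partial>M)"
    using d dr by simp
  also have "(\<integral>x. d x * r x \<partial>M) \<le> sqrt (\<integral>x. (d x)\<^sup>2 \<partial>M) * sqrt (\<integral>x. (r x)\<^sup>2 \<partial>M)"
    by (rule Cauchy_Schwarz_integral) (use d2 r2 in simp_all)
  also have "\<dots> \<le> sqrt (\<integral>x. (t x)\<^sup>2 \<partial>M) * sqrt (\<integral>x. (r x)\<^sup>2 \<partial>M)"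
    by (intro mult_right_mono real_sqrt_le_mono integral_mono d2 t2) (simp_all add: d2_le_t2)
  finally show ?thesis unfolding r_def by (simp add: mult.commute)
qed

lemma tv_dist_bounds:
  fixes P Q :: "'a pmf"
  shows abs_prob_diff_le_tv_dist: "\<bar>measure_pmf.prob P A - measure_pmf.prob Q A\<bar> \<le> tv_dist P Q"
    and tv_dist_le_1: "tv_dist P Q \<le> 1"
proof -
  have abs_diff_le_1: "\<bar>measure_pmf.prob P B - measure_pmf.prob Q B\<bar> \<le> 1" for B
    using measure_pmf.prob_le_1[of P B] measure_pmf.prob_le_1[of Q B]
      measure_nonneg[of "measure_pmf P" B] measure_nonneg[of "measure_pmf Q" B] by linarith
  then have "bdd_above (range (\<lambda>B. \<bar>measure_pmf.prob P B - measure_pmf.prob Q B\<bar>))"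
    by (intro bdd_aboveI[where M=1]) auto
  then show "\<bar>measure_pmf.prob P A - measure_pmf.prob Q A\<bar> \<le> tv_dist P Q"
    unfolding tv_dist_def by (rule cSUP_upper[OF UNIV_I])
  show "tv_dist P Q \<le> 1"
    unfolding tv_dist_def by (rule cSUP_least) (simp_all add: abs_diff_le_1)
qed

lemma succ_prob_eq_prob:
  assumes "\<And>y. rstar q y \<in> {0, 1}"
  shows "succ_prob rstar pol q = measure_pmf.prob (pol q) {y. rstar q y = 1}"
proof -
  have "succ_prob rstar pol q = measure_pmf.expectation (pol q) (indicator {y. rstar q y = 1})"
    unfolding succ_prob_def using assms
    by (intro Bochner_Integration.integral_cong) (force simp: indicator_def)+
  then show ?thesis by simp
qed

lemma abs_succ_prob_diff_le_tv_dist: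
  assumes "\<And>y. rstar q y \<in> {0, 1}"
  shows "\<bar>succ_prob rstar pol q - succ_prob rstar pol' q\<bar> \<le> tv_dist (pol q) (pol' q)"
  unfolding succ_prob_eq_prob[where rstar=rstar and q=q, OF assms]
  by (rule abs_prob_diff_le_tv_dist)

lemma measure_unif01_atMost:
  assumes "0 \<le> a" "a \<le> 1"
  shows "measure unif01 {..a} = a"
proof -
  have "{0..1} \<inter> {..a} = {0..a}" using assms by auto
  then show ?thesis using assms by (simp add: measure_uniform_measure)
qed

lemma integral_noisy_reward:
  assumes "rstar q y \<in> {0, 1}" "rp q \<in> {0..1}" "rm q \<in> {0..1}"
  shows "(\<integral>xi. noisy_reward rstar rp rm q y xi \<partial>unif01) = rp q + (1 - rp q - rm q) * rstar q y"
  using assms measure_unif01_atMost[of "rp q"] measure_unif01_atMost[of "1 - rm q"]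
  by (auto simp: noisy_reward_def)

lemma noisy_mean_eq_mu_k:
  assumes "\<And>y. rstar q y \<in> {0, 1}" "rp q \<in> {0..1}" "rm q \<in> {0..1}"
  shows "noisy_mean rstar rp rm pol q = mu_k rstar rp rm pol q"
proof -
  have "\<bar>rstar q y\<bar> \<le> 1" for y using assms(1)[of y] by auto
  then have "integrable (measure_pmf (pol q)) (rstar q)"
    by (intro measure_pmf.integrable_const_bound[where B=1]) simp_all
  then show ?thesis
    using assms by (simp add: noisy_mean_def mu_k_def succ_prob_def integral_noisy_reward)
qed

lemma noisy_surrogate_eq:
  assumes "\<And>y. rstar q y \<in> {0, 1}" "rp q \<in> {0..1}" "rm q \<in> {0..1}"
  shows "noisy_surrogate rstar rp rm polk pol q
    = (1 - rp q - rm q) * (succ_prob rstar pol q - succ_prob rstar polk q) / sigma_k rstar rp rm polk q"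
  using assms by (simp add: noisy_surrogate_def noisy_mean_eq_mu_k mu_k_def algebra_simps)

theorem theorem3:
  fixes M :: "'q measure"
    and rstar :: "'q \<Rightarrow> 'o::countable \<Rightarrow> real"
    and rp rm :: "'q \<Rightarrow> real"
    and polk pol :: "'q \<Rightarrow> 'o pmf"
  assumes "prob_space M"
    and "\<And>q y. rstar q y \<in> {0, 1}"
    and "\<And>q. rp q \<in> {0..1}" and "\<And>q. rm q \<in> {0..1}"
    and "rp \<in> borel_measurable M" and "rm \<in> borel_measurable M"
    and "succ_prob rstar pol \<in> borel_measurable M"
    and "succ_prob rstar polk \<in> borel_measurable M"
    and "(\<lambda>q. tv_dist (pol q) (polk q)) \<in> borel_measurable M"
    and "AE q in M. 0 < mu_k rstar rp rm polk q \<and> mu_k rstar rp rm polk q < 1"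
    and "integrable M (\<lambda>q. ((1 - rp q - rm q - sigma_k rstar rp rm polk q)
                              / sigma_k rstar rp rm polk q)\<^sup>2)"
  shows "(\<integral>q. succ_prob rstar pol q - succ_prob rstar polk q \<partial>M)
         \<ge> (\<integral>q. noisy_surrogate rstar rp rm polk pol q \<partial>M)
           - 2 * sqrt (\<integral>q. ((1 - rp q - rm q - sigma_k rstar rp rm polk q)
                              / sigma_k rstar rp rm polk q)\<^sup>2 \<partial>M)
               * sqrt (\<integral>q. (tv_dist (pol q) (polk q))\<^sup>2 \<partial>M)"
proof -
  interpret prob_space M by fact
  note [measurable] = assms(5-9)
  let ?c = "\<lambda>q. 1 - rp q - rm q" and ?s = "sigma_k rstar rp rm polk"
    and ?d = "\<lambda>q. succ_prob rstar pol q - succ_prob rstar polk q"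
    and ?t = "\<lambda>q. tv_dist (pol q) (polk q)"
  have [measurable]: "?s \<in> borel_measurable M"
    unfolding sigma_k_def[abs_def] mu_k_def by measurable
  have "\<bar>?d q\<bar> \<le> ?t q" for q
    by (rule abs_succ_prob_diff_le_tv_dist) (rule assms(2))
  moreover have "AE q in M. ?s q \<noteq> 0"
    using assms(10) by eventually_elim (simp add: sigma_k_def)
  ultimately have "(\<integral>q. ?c q * ?d q / ?s q \<partial>M)
      - sqrt (\<integral>q. ((?c q - ?s q) / ?s q)\<^sup>2 \<partial>M) * sqrt (\<integral>q. (?t q)\<^sup>2 \<partial>M) \<le> (\<integral>q. ?d q \<partial>M)"
    by (intro integral_ge_integral_rescaled) (simp_all add: assms(11) tv_dist_le_1)
  moreover have "(\<integral>q. noisy_surrogate rstar rp rm polk pol q \<partial>M) = (\<integral>q. ?c q * ?d q / ?s q \<partial>M)"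
    using assms(2-4) by (simp add: noisy_surrogate_eq)
  moreover have "0 \<le> sqrt (\<integral>q. ((?c q - ?s q) / ?s q)\<^sup>2 \<partial>M) * sqrt (\<integral>q. (?t q)\<^sup>2 \<partial>M)"
    by simp
  ultimately show ?thesis unfolding mult.assoc by linarith
qed

end
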